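(* Let $T$, $\varphi_\ell$, $1<r<R$ and $\mathcal{L}$ be as in the setting below, and let $\rho\in(r,R)$. Then $\mathcal{L}$ defines a bounded operator on $H^2(D_\rho)$ and, for all $N\in\mathbb{N}_0$, \[ \|\mathcal{L}-\mathcal{P}_N\mathcal{L}\|_{H^2(D_\rho)\to H^2(D_\rho)}\le C\left(\frac{\rho}{R}\right)^N,\qquad \|\mathcal{L}-\mathcal{L}\mathcal{P}_N\|_{H^2(D_\rho)\to H^2(D_\rho)}\le C\left(\frac{r}{\rho}\right)^N, \] where $C=\frac{\rho}{\sqrt{\rho^2-r^2}}\sup_{z\in D_R}\sum_{\ell=1}^d|\varphi_\ell'(z)|$ and $\mathcal{P}_N\colon H^2(D_\rho)\to H^2(D_\rho)$ is the Taylor projection. In particular \[ \|\mathcal{L}-\mathcal{P}_N\mathcal{L}\mathcal{P}_N\|_{H^2(D_\rho)\to H^2(D_\rho)}\le C\left(\left(\frac{\rho}{R}\right)^N+\left(\frac{r}{\rho}\right)^N\right) \] for $N\in\mathbb{N}_0$, and for the choice $\rho=\sqrt{Rr}$, \[ \|\mathcal{L}-\mathcal{P}_N\mathcal{L}\mathcal{P}_N\|_{H^2(D_\rho)\to H^2(D_\rho)}\le 2C\left(\frac{r}{R}\right)^{N/2}. \]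
   Context: Let $I=[-1,1]$. $T\colon I\to I$ is an analytic full branch map: there are closed intervals $I_1,\dots,I_d$ with disjoint interiors and $I=\bigcup_\ell I_\ell$ such that $T|_{\mathrm{int}(I_\ell)}$ is an analytic diffeomorphism with $\overline{T(I_\ell)}=I$ for each $\ell$. Let $\varphi_\ell\colon I\to I_\ell$ denote the inverse branches. It is assumed that there are $1<r<R$ such that each $\varphi_\ell$ extends to a bounded holomorphic function on $D_R=\{|z|<R\}$ and $\bigcup_{\ell}\varphi_\ell(D_R)\subseteq D_r$, where $D_s=\{z\in\mathbb{C}:|z|<s\}$. With $\sigma_\ell=\mathrm{sgn}(\varphi_\ell'(0))$, the transfer operator is $(\mathcal{L}f)(z)=\sum_{\ell=1}^d\sigma_\ell\varphi_\ell'(z)f(\varphi_\ell(z))$. $H^2(D_\rho)$ is the Hardy space of holomorphic $f(z)=\sum_n f_nz^n$ on $D_\rho$ with $\|f\|^2=\sum_n|f_n|^2\rho^{2n}<\infty$ (equivalently $\sup_{t<\rho}\frac1{2\pi}\int_0^{2\pi}|f(te^{i\theta})|^2d\theta$). The Taylor projection is $(\mathcal{P}_Nf)(z)=\sum_{n=0}^{N-1}f_nz^n$. *)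

theory Defs
  imports "HOL-Complex_Analysis.Complex_Analysis"
begin

definition taylor_coeff :: "(complex \<Rightarrow> complex) \<Rightarrow> nat \<Rightarrow> complex" where
  "taylor_coeff f n = (deriv ^^ n) f 0 / of_nat (fact n)"

definition H2 :: "real \<Rightarrow> (complex \<Rightarrow> complex) set" where
  "H2 \<rho> = {f. f holomorphic_on ball 0 \<rho> \<and>
              summable (\<lambda>n. (cmod (taylor_coeff f n))\<^sup>2 * \<rho> ^ (2 * n))}"

definition h2norm :: "real \<Rightarrow> (complex \<Rightarrow> complex) \<Rightarrow> real" where
  "h2norm \<rho> f = sqrt (\<Sum>n. (cmod (taylor_coeff f n))\<^sup>2 * \<rho> ^ (2 * n))"

definition h2_opnorm :: "real \<Rightarrow> ((complex \<Rightarrow> complex) \<Rightarrow> (complex \<Rightarrow> complex)) \<Rightarrow> real" where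
  "h2_opnorm \<rho> A = Sup {h2norm \<rho> (A f) | f. f \<in> H2 \<rho> \<and> h2norm \<rho> f \<le> 1}"

definition h2_bounded_op :: "real \<Rightarrow> ((complex \<Rightarrow> complex) \<Rightarrow> (complex \<Rightarrow> complex)) \<Rightarrow> bool" where
  "h2_bounded_op \<rho> A \<longleftrightarrow> (\<forall>f\<in>H2 \<rho>. A f \<in> H2 \<rho>) \<and>
      (\<exists>K. \<forall>f\<in>H2 \<rho>. h2norm \<rho> (A f) \<le> K * h2norm \<rho> f)"

definition taylor_proj :: "nat \<Rightarrow> (complex \<Rightarrow> complex) \<Rightarrow> (complex \<Rightarrow> complex)" where
  "taylor_proj N f = (\<lambda>z. \<Sum>n<N. taylor_coeff f n * z ^ n)"

definition transfer_op :: "nat \<Rightarrow> (nat \<Rightarrow> complex \<Rightarrow> complex) \<Rightarrow> (complex \<Rightarrow> complex) \<Rightarrow> (complex \<Rightarrow> complex)" where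
  "transfer_op d \<phi> f = (\<lambda>z. \<Sum>l=1..d. sgn (deriv (\<phi> l) 0) * deriv (\<phi> l) z * f (\<phi> l z))"

definition real_analytic_on :: "(real \<Rightarrow> real) \<Rightarrow> real set \<Rightarrow> bool" where
  "real_analytic_on T S \<longleftrightarrow> (\<forall>x\<in>S. \<exists>e>0. \<exists>c::nat \<Rightarrow> real.
       \<forall>y. \<bar>y - x\<bar> < e \<longrightarrow> (\<lambda>n. c n * (y - x) ^ n) sums T y)"

end

theory Submission
  imports Defs
begin

text \<open>
  For f in H^2(D_rho), Cauchy-Schwarz on the Taylor series gives
  |f w - P_N f w| <= rho / sqrt (rho^2 - r^2) * (r / rho)^N * ||f|| for |w| <= r.
  As the branches map D_R into D_r, both L f and L (f - P_N f) are then holomorphic and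
  bounded on D_R. Gutzmer's inequality sum |a_n|^2 t^(2n) <= (max_{|z| = t} |g z|)^2,
  obtained from the discrete Parseval identity at the K-th roots of unity applied to the
  Taylor polynomials of g, turns these sup bounds into H^2(D_t) bounds for every t < R.
  At t = rho this bounds L - L P_N; comparing the weights rho^(2n) and t^(2n) for n >= N
  and letting t tend to R bounds L - P_N L. Below N the Taylor coefficients of
  L - P_N L P_N are those of L - L P_N and from N on those of L - P_N L, so its norm is at
  most the sum of the two bounds.
\<close>

lemma sums_zero_initial_segment:
  fixes f :: "nat \<Rightarrow> 'a::real_normed_vector"
  assumes "f sums s"
  shows "(\<lambda>n. if n < N then 0 else f n) sums (s - (\<Sum>n<N. f n))"
proof -
  have "(\<lambda>n. if n \<in> {..<N} then 0 else f n) sums (s + (\<Sum>n\<in>{..<N}. 0 - f n))"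
    by (rule sums_If_finite_set'[OF assms]) auto
  then show ?thesis
    by (simp add: sum_negf)
qed

lemma geometric_tail_sums:
  fixes q :: "'a::real_normed_field"
  assumes "norm q < 1"
  shows "(\<lambda>n. if n < N then 0 else q ^ n) sums (q ^ N / (1 - q))"
proof -
  have "q \<noteq> 1"
    using assms by auto
  then show ?thesis
    using sums_zero_initial_segment[OF geometric_sums[OF assms], of N]
    by (simp add: sum_gp_strict diff_divide_distrib)
qed

lemma Cauchy_Schwarz_suminf:
  fixes x y :: "nat \<Rightarrow> real"
  assumes "\<And>n. 0 \<le> x n" "\<And>n. 0 \<le> y n"
    and "summable (\<lambda>n. (x n)\<^sup>2)" "summable (\<lambda>n. (y n)\<^sup>2)"
  shows "summable (\<lambda>n. x n * y n)"
    and "(\<Sum>n. x n * y n) \<le> sqrt (\<Sum>n. (x n)\<^sup>2) * sqrt (\<Sum>n. (y n)\<^sup>2)"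
proof -
  have L2_set_le: "L2_set z A \<le> sqrt (\<Sum>n. (z n)\<^sup>2)" if "summable (\<lambda>n. (z n)\<^sup>2)" "finite A" for z A
    unfolding L2_set_def using that by (intro real_sqrt_le_mono sum_le_suminf) auto
  have partial: "(\<Sum>n\<in>A. x n * y n) \<le> sqrt (\<Sum>n. (x n)\<^sup>2) * sqrt (\<Sum>n. (y n)\<^sup>2)"
    if "finite A" for A
  proof -
    have "(\<Sum>n\<in>A. x n * y n) = (\<Sum>n\<in>A. \<bar>x n\<bar> * \<bar>y n\<bar>)"
      using assms by simp
    also have "\<dots> \<le> L2_set x A * L2_set y A"
      by (rule L2_set_mult_ineq)
    also have "\<dots> \<le> sqrt (\<Sum>n. (x n)\<^sup>2) * sqrt (\<Sum>n. (y n)\<^sup>2)"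
      using assms that by (intro mult_mono L2_set_le L2_set_nonneg) (auto intro: suminf_nonneg)
    finally show ?thesis .
  qed
  show sm: "summable (\<lambda>n. x n * y n)"
    using assms partial by (intro bounded_imp_summable) auto
  show "(\<Sum>n. x n * y n) \<le> sqrt (\<Sum>n. (x n)\<^sup>2) * sqrt (\<Sum>n. (y n)\<^sup>2)"
    using partial by (intro suminf_le_const[OF sm]) auto
qed

lemma norm_power_series_remainder_le:
  fixes c :: "nat \<Rightarrow> complex"
  assumes "(\<lambda>n. c n * z ^ n) sums G" "summable (\<lambda>n. cmod (c n) * t ^ n)" "cmod z \<le> t"
  shows "cmod (G - (\<Sum>n<K. c n * z ^ n)) \<le> (\<Sum>n. cmod (c n) * t ^ n) - (\<Sum>n<K. cmod (c n) * t ^ n)"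
proof -
  have tail: "(\<lambda>n. if n < K then 0 else c n * z ^ n) sums (G - (\<Sum>n<K. c n * z ^ n))"
    by (rule sums_zero_initial_segment[OF assms(1)])
  have bound: "(\<lambda>n. if n < K then 0 else cmod (c n) * t ^ n)
      sums ((\<Sum>n. cmod (c n) * t ^ n) - (\<Sum>n<K. cmod (c n) * t ^ n))"
    by (rule sums_zero_initial_segment[OF summable_sums[OF assms(2)]])
  have "norm (if n < K then 0 else c n * z ^ n) \<le> (if n < K then 0 else cmod (c n) * t ^ n)" for n
    using assms(3) by (auto simp: norm_mult norm_power intro!: mult_left_mono power_mono)
  from norm_suminf_le[OF this sums_summable[OF bound]] show ?thesis
    using tail bound by (simp add: sums_iff)
qed

lemma taylor_coeff_sums:
  assumes "f holomorphic_on ball 0 s" "w \<in> ball 0 s"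
  shows "(\<lambda>n. taylor_coeff f n * w ^ n) sums f w"
  using holomorphic_power_series[OF assms] by (simp add: taylor_coeff_def)

lemma taylor_coeff_diff:
  assumes "f holomorphic_on S" "g holomorphic_on S" "open S" "0 \<in> S"
  shows "taylor_coeff (f - g) n = taylor_coeff f n - taylor_coeff g n"
  using higher_deriv_diff[OF assms, of n]
  by (simp add: taylor_coeff_def fun_diff_def diff_divide_distrib)

lemma taylor_coeff_taylor_proj:
  "taylor_coeff (taylor_proj N f) n = (if n < N then taylor_coeff f n else 0)"
proof -
  have "taylor_proj N f has_fps_expansion (\<Sum>k<N. fps_const (taylor_coeff f k) * fps_X ^ k)"
    unfolding taylor_proj_def by (intro fps_expansion_intros)
  from fps_nth_fps_expansion[OF this, of n]
  have "taylor_coeff (taylor_proj N f) n = (\<Sum>k<N. taylor_coeff f k * (if n = k then 1 else 0))"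
    by (simp add: taylor_coeff_def fps_sum_nth)
  also have "\<dots> = (if n < N then taylor_coeff f n else 0)"
    by (simp add: if_distrib cong: if_cong)
  finally show ?thesis .
qed

lemma taylor_proj_holomorphic: "taylor_proj N f holomorphic_on S"
  unfolding taylor_proj_def by (intro holomorphic_intros)

lemma taylor_remainder_holomorphic:
  "f holomorphic_on S \<Longrightarrow> f - taylor_proj N f holomorphic_on S"
  unfolding fun_diff_def by (intro holomorphic_on_diff taylor_proj_holomorphic)

lemma taylor_coeff_zero: "taylor_coeff (\<lambda>z. 0) n = 0"
  using taylor_coeff_taylor_proj[of 0] by (simp add: taylor_proj_def)

lemma h2norm_nonneg: "f \<in> H2 \<rho> \<Longrightarrow> 0 \<le> h2norm \<rho> f"
  unfolding H2_def h2norm_def by (auto intro!: suminf_nonneg)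

lemma zero_in_H2: "(\<lambda>z. 0) \<in> H2 \<rho>"
  by (simp add: H2_def taylor_coeff_zero)

lemma h2norm_zero: "h2norm \<rho> (\<lambda>z. 0) = 0"
  by (simp add: h2norm_def taylor_coeff_zero)

lemma h2_opnorm_le:
  assumes "0 \<le> c" and "\<And>f. f \<in> H2 \<rho> \<Longrightarrow> h2norm \<rho> (A f) \<le> c * h2norm \<rho> f"
  shows "h2_opnorm \<rho> A \<le> c"
  unfolding h2_opnorm_def
proof (rule cSup_least)
  show "{h2norm \<rho> (A f) |f. f \<in> H2 \<rho> \<and> h2norm \<rho> f \<le> 1} \<noteq> {}"
    using zero_in_H2 h2norm_zero by fastforce
next
  fix x
  assume "x \<in> {h2norm \<rho> (A f) |f. f \<in> H2 \<rho> \<and> h2norm \<rho> f \<le> 1}"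
  then obtain f where "f \<in> H2 \<rho>" "h2norm \<rho> f \<le> 1" "x = h2norm \<rho> (A f)"
    by blast
  then show "x \<le> c"
    using assms(2)[of f] mult_left_mono[OF _ assms(1), of "h2norm \<rho> f" 1] by simp
qed

lemma h2norm_le_add_of_coeff_le:
  assumes "v \<in> H2 \<rho>" "w \<in> H2 \<rho>"
    and coeff: "\<And>n. (cmod (taylor_coeff u n))\<^sup>2
                    \<le> (cmod (taylor_coeff v n))\<^sup>2 + (cmod (taylor_coeff w n))\<^sup>2"
  shows "h2norm \<rho> u \<le> h2norm \<rho> v + h2norm \<rho> w"
proof -
  define U V W where "U = (\<lambda>n. (cmod (taylor_coeff u n))\<^sup>2 * \<rho> ^ (2 * n))"
    and "V = (\<lambda>n. (cmod (taylor_coeff v n))\<^sup>2 * \<rho> ^ (2 * n))"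
    and "W = (\<lambda>n. (cmod (taylor_coeff w n))\<^sup>2 * \<rho> ^ (2 * n))"
  have VW: "summable V" "summable W" "0 \<le> suminf V" "0 \<le> suminf W"
    using assms(1,2) by (auto simp: H2_def V_def W_def intro!: suminf_nonneg)
  have "U n \<le> V n + W n" for n
  proof -
    have "0 \<le> \<rho> ^ (2 * n)"
      by (simp add: power_mult)
    from mult_right_mono[OF coeff this] show ?thesis
      by (simp add: U_def V_def W_def distrib_right)
  qed
  then have "suminf U \<le> suminf V + suminf W"
    unfolding suminf_add[OF VW(1,2)]
  proof (rule suminf_le)
    show "summable (\<lambda>n. V n + W n)"
      using VW by (intro summable_add)
    then show "summable U"
      by (rule summable_comparison_test'[where N = 0]) (use \<open>\<And>n. U n \<le> V n + W n\<close> in \<open>auto simp: U_def\<close>)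
  qed
  then have "sqrt (suminf U) \<le> sqrt (suminf V) + sqrt (suminf W)"
    using sqrt_add_le_add_sqrt[OF VW(3,4)] real_sqrt_le_mono by (blast intro: order_trans)
  then show ?thesis
    by (simp add: h2norm_def U_def V_def W_def)
qed

lemma norm_H2_taylor_remainder_le:
  assumes f: "f \<in> H2 \<rho>" and r: "0 \<le> r" "r < \<rho>" and w: "cmod w \<le> r"
  shows "cmod (f w - taylor_proj N f w) \<le> \<rho> / sqrt (\<rho>\<^sup>2 - r\<^sup>2) * (r / \<rho>) ^ N * h2norm \<rho> f"
proof -
  define c where "c = taylor_coeff f"
  define x where "x n = cmod (c n) * \<rho> ^ n" for n
  define y where "y n = (if n < N then 0 else (r / \<rho>) ^ n)" for n
  define q where "q = (r / \<rho>)\<^sup>2"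
  have q: "0 \<le> q" "q < 1"
    using r by (auto simp: q_def power_divide power_strict_mono)
  have xx: "(\<lambda>n. (x n)\<^sup>2) = (\<lambda>n. (cmod (c n))\<^sup>2 * \<rho> ^ (2 * n))"
    by (auto simp: x_def power_mult_distrib power_mult[symmetric] mult.commute)
  have "(\<lambda>n. (y n)\<^sup>2) = (\<lambda>n. if n < N then 0 else q ^ n)"
    by (auto simp: y_def q_def power_mult[symmetric] mult.commute)
  then have yy: "(\<lambda>n. (y n)\<^sup>2) sums (q ^ N / (1 - q))"
    using geometric_tail_sums[of q N] q by simp
  have x2: "summable (\<lambda>n. (x n)\<^sup>2)"
    using f by (simp add: xx H2_def c_def)
  have x0: "0 \<le> x n" and y0: "0 \<le> y n" for n
    using r by (simp_all add: x_def y_def)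
  note xy = Cauchy_Schwarz_suminf[OF x0 y0 x2 sums_summable[OF yy]]
  have "(\<lambda>n. if n < N then 0 else c n * w ^ n) sums (f w - taylor_proj N f w)"
    unfolding c_def taylor_proj_def
    using sums_zero_initial_segment[OF taylor_coeff_sums[of f \<rho> w]] f r w by (simp add: H2_def)
  moreover have "norm (if n < N then 0 else c n * w ^ n) \<le> x n * y n" for n
    using w r by (auto simp: x_def y_def norm_mult norm_power power_divide
        intro!: mult_left_mono power_mono)
  ultimately have "cmod (f w - taylor_proj N f w) \<le> sqrt (\<Sum>n. (x n)\<^sup>2) * sqrt (\<Sum>n. (y n)\<^sup>2)"
    using norm_suminf_le[OF _ xy(1)] xy(2) by (fastforce simp: sums_iff)
  also have "sqrt (\<Sum>n. (x n)\<^sup>2) = h2norm \<rho> f"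
    by (simp add: xx h2norm_def c_def)
  also have "sqrt (\<Sum>n. (y n)\<^sup>2) = (r / \<rho>) ^ N * (\<rho> / sqrt (\<rho>\<^sup>2 - r\<^sup>2))"
  proof -
    have "1 - q = ((sqrt (\<rho>\<^sup>2 - r\<^sup>2)) / \<rho>)\<^sup>2"
      using r by (simp add: q_def power_divide field_simps)
    moreover have "q ^ N = ((r / \<rho>) ^ N)\<^sup>2"
      by (simp add: q_def power_mult[symmetric] mult.commute)
    ultimately show ?thesis
      using yy r by (simp add: sums_iff real_sqrt_divide)
  qed
  finally show ?thesis
    by (simp add: mult_ac)
qed

lemma H2_taylor_remainder_rescale:
  assumes g: "g \<in> H2 t" and \<rho>: "0 < \<rho>" "\<rho> \<le> t"
  shows "g - taylor_proj N g \<in> H2 \<rho>"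
    and "h2norm \<rho> (g - taylor_proj N g) \<le> (\<rho> / t) ^ N * h2norm t g"
proof -
  define c where "c = taylor_coeff g"
  define X where "X n = (cmod (taylor_coeff (g - taylor_proj N g) n))\<^sup>2 * \<rho> ^ (2 * n)" for n
  define Y where "Y = (\<lambda>n. (cmod (c n))\<^sup>2 * t ^ (2 * n))"
  have holo: "g holomorphic_on ball 0 t" and Y: "summable Y"
    using g by (simp_all add: H2_def Y_def c_def)
  have X: "X n = (if n < N then 0 else (cmod (c n))\<^sup>2 * \<rho> ^ (2 * n))" for n
    using taylor_coeff_diff[of g "ball 0 t" "taylor_proj N g" n] holo \<rho>
    by (simp add: X_def c_def taylor_coeff_taylor_proj taylor_proj_holomorphic)
  have XY: "X n \<le> ((\<rho> / t) ^ N)\<^sup>2 * Y n" for n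
  proof (cases "n < N")
    case False
    have "\<rho> ^ (2 * n) = (\<rho> / t) ^ (2 * n) * t ^ (2 * n)"
      using \<rho> by (simp add: power_divide)
    also have "\<dots> \<le> (\<rho> / t) ^ (2 * N) * t ^ (2 * n)"
      using False \<rho> by (intro mult_right_mono power_decreasing) auto
    finally have "(cmod (c n))\<^sup>2 * \<rho> ^ (2 * n) \<le> (cmod (c n))\<^sup>2 * ((\<rho> / t) ^ (2 * N) * t ^ (2 * n))"
      by (rule mult_left_mono) simp
    then show ?thesis
      using False by (simp add: X Y_def mult_ac flip: power_mult)
  qed (simp add: X Y_def)
  have X0: "0 \<le> X n" for n
    by (simp add: X_def power_mult)
  have sX: "summable X"
    by (rule summable_comparison_test'[OF summable_mult[OF Y]]) (use XY X0 in auto)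
  show "g - taylor_proj N g \<in> H2 \<rho>"
    using sX holomorphic_on_subset[OF taylor_remainder_holomorphic[OF holo] subset_ball[OF \<rho>(2)]]
    by (simp add: H2_def X_def[abs_def])
  have "suminf X \<le> ((\<rho> / t) ^ N)\<^sup>2 * suminf Y"
    using suminf_le[OF XY sX summable_mult[OF Y]] suminf_mult[OF Y] by simp
  then have "sqrt (suminf X) \<le> (\<rho> / t) ^ N * sqrt (suminf Y)"
    using real_sqrt_le_mono \<rho> by (fastforce simp: real_sqrt_mult)
  then show "h2norm \<rho> (g - taylor_proj N g) \<le> (\<rho> / t) ^ N * h2norm t g"
    by (simp add: h2norm_def X_def[abs_def] Y_def c_def)
qed

lemma sum_roots_of_unity_orthogonal:
  assumes "n < K" "m < K"
  shows "(\<Sum>k<K. (cis (2 * pi / K) ^ n * cnj (cis (2 * pi / K) ^ m)) ^ k)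
         = (if n = m then of_nat K else 0)"
proof -
  define \<zeta> where "\<zeta> = cis (2 * pi / K)"
  have K: "0 < K"
    using assms by simp
  have \<zeta>_pow: "\<zeta> ^ j = cis (2 * pi * real j / real K)" for j
    unfolding \<zeta>_def Complex.DeMoivre by (simp add: field_simps)
  have "\<zeta> ^ K = 1"
    using K by (simp add: \<zeta>_pow)
  have cnj_eq_divide: "\<zeta> ^ n * cnj (\<zeta> ^ m) = \<zeta> ^ n / \<zeta> ^ m"
    by (simp add: \<zeta>_def cis_cnj divide_inverse power_inverse flip: cis_inverse)
  show ?thesis
  proof (cases "n = m")
    case True
    then show ?thesis
      unfolding \<zeta>_def [symmetric] cnj_eq_divide by (simp add: \<zeta>_def)
  next
    case False
    define x where "x = \<zeta> ^ n / \<zeta> ^ m"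
    have "\<zeta> ^ n \<noteq> \<zeta> ^ m"
      using inj_onD[OF bij_betw_imp_inj_on[OF Complex.bij_betw_roots_unity[OF K]], of n m]
        False assms unfolding \<zeta>_pow by blast
    then have "x \<noteq> 1"
      by (simp add: x_def \<zeta>_def)
    moreover have "x ^ K = 1"
    proof -
      have "x ^ K = (\<zeta> ^ K) ^ n / (\<zeta> ^ K) ^ m"
        by (simp add: x_def power_divide flip: power_mult) (simp add: mult.commute)
      then show ?thesis
        using \<open>\<zeta> ^ K = 1\<close> by simp
    qed
    ultimately have "(\<Sum>k<K. x ^ k) = 0"
      by (simp add: sum_gp_strict)
    then show ?thesis
      unfolding \<zeta>_def [symmetric] cnj_eq_divide x_def [symmetric] using False by simp
  qed
qed

lemma discrete_Parseval:
  fixes a :: "nat \<Rightarrow> complex"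
  shows "(\<Sum>k<K. (cmod (\<Sum>n<K. a n * (of_real t * cis (2 * pi / K) ^ k) ^ n))\<^sup>2)
         = real K * (\<Sum>n<K. (cmod (a n))\<^sup>2 * t ^ (2 * n))"
proof -
  define \<zeta> where "\<zeta> = cis (2 * pi / K)"
  define p where "p k = (\<Sum>n<K. a n * (of_real t * \<zeta> ^ k) ^ n)" for k
  have orthogonal: "(\<Sum>k<K. (\<zeta> ^ n * cnj (\<zeta> ^ m)) ^ k) = (if n = m then of_nat K else 0)"
    if "n < K" "m < K" for n m
    unfolding \<zeta>_def by (rule sum_roots_of_unity_orthogonal[OF that])
  have pw: "(of_real t * w ^ k) ^ n = of_real t ^ n * (w ^ n) ^ k" for w :: complex and n k
    by (simp add: power_mult_distrib flip: power_mult) (simp add: mult.commute)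
  have product_term: "a n * (of_real t * \<zeta> ^ k) ^ n * (cnj (a m) * (of_real t * cnj \<zeta> ^ k) ^ m)
      = a n * cnj (a m) * of_real (t ^ (n + m)) * (\<zeta> ^ n * cnj (\<zeta> ^ m)) ^ k" for n m k
  proof -
    have "(\<zeta> ^ n * cnj (\<zeta> ^ m)) ^ k = (\<zeta> ^ n) ^ k * (cnj \<zeta> ^ m) ^ k"
      by (simp only: power_mult_distrib complex_cnj_power)
    moreover have "complex_of_real (t ^ (n + m)) = of_real t ^ n * of_real t ^ m"
      by (simp add: power_add)
    ultimately show ?thesis
      unfolding pw by (simp only: mult_ac)
  qed
  have "complex_of_real (\<Sum>k<K. (cmod (p k))\<^sup>2) = (\<Sum>k<K. p k * cnj (p k))"
    by (simp only: of_real_sum complex_norm_square)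
  also have "\<dots> = (\<Sum>k<K. \<Sum>n<K. \<Sum>m<K.
      a n * cnj (a m) * of_real (t ^ (n + m)) * (\<zeta> ^ n * cnj (\<zeta> ^ m)) ^ k)"
  proof (rule sum.cong[OF refl])
    fix k
    have "cnj (p k) = (\<Sum>m<K. cnj (a m) * (of_real t * cnj \<zeta> ^ k) ^ m)"
      by (simp add: p_def cnj_sum)
    then show "p k * cnj (p k) = (\<Sum>n<K. \<Sum>m<K.
        a n * cnj (a m) * of_real (t ^ (n + m)) * (\<zeta> ^ n * cnj (\<zeta> ^ m)) ^ k)"
      by (simp only: p_def sum_product product_term)
  qed
  also have "\<dots> = (\<Sum>n<K. \<Sum>m<K. \<Sum>k<K.
      a n * cnj (a m) * of_real (t ^ (n + m)) * (\<zeta> ^ n * cnj (\<zeta> ^ m)) ^ k)"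
    by (rule trans[OF sum.swap], rule sum.cong[OF refl], rule sum.swap)
  also have "\<dots> = (\<Sum>n<K. \<Sum>m<K.
      a n * cnj (a m) * of_real (t ^ (n + m)) * (\<Sum>k<K. (\<zeta> ^ n * cnj (\<zeta> ^ m)) ^ k))"
    by (simp only: sum_distrib_left)
  also have "\<dots> = (\<Sum>n<K. \<Sum>m<K.
      if n = m then a n * cnj (a n) * of_real (t ^ (2 * n)) * of_nat K else 0)"
    by (intro sum.cong refl) (auto simp del: complex_cnj_power simp add: orthogonal mult_2)
  also have "\<dots> = (\<Sum>n<K. a n * cnj (a n) * of_real (t ^ (2 * n)) * of_nat K)"
    by (simp add: sum.delta)
  also have "\<dots> = (\<Sum>n<K. complex_of_real (real K * ((cmod (a n))\<^sup>2 * t ^ (2 * n))))"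
    by (intro sum.cong refl) (simp only: of_real_mult complex_norm_square of_real_of_nat_eq mult_ac)
  also have "\<dots> = complex_of_real (real K * (\<Sum>n<K. (cmod (a n))\<^sup>2 * t ^ (2 * n)))"
    by (simp only: of_real_sum sum_distrib_left)
  finally show ?thesis
    unfolding p_def \<zeta>_def of_real_eq_iff .
qed

lemma Gutzmer_inequality_poly:
  fixes a :: "nat \<Rightarrow> complex"
  assumes "0 \<le> t" and bound: "\<And>z. cmod z = t \<Longrightarrow> cmod (\<Sum>n<K. a n * z ^ n) \<le> B"
  shows "(\<Sum>n<K. (cmod (a n))\<^sup>2 * t ^ (2 * n)) \<le> B\<^sup>2"
proof (cases "K = 0")
  case False
  have "real K * (\<Sum>n<K. (cmod (a n))\<^sup>2 * t ^ (2 * n))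
      = (\<Sum>k<K. (cmod (\<Sum>n<K. a n * (of_real t * cis (2 * pi / K) ^ k) ^ n))\<^sup>2)"
    by (rule discrete_Parseval [symmetric])
  also have "\<dots> \<le> (\<Sum>k<K. B\<^sup>2)"
    using \<open>0 \<le> t\<close> by (intro sum_mono power_mono bound) (auto simp: norm_mult norm_power)
  also have "\<dots> = real K * B\<^sup>2"
    by simp
  finally show ?thesis
    using False by simp
qed simp

lemma Gutzmer_inequality:
  assumes g: "g holomorphic_on ball 0 s" and t: "0 \<le> t" "t < s"
    and bound: "\<And>z. cmod z = t \<Longrightarrow> cmod (g z) \<le> M"
  shows "summable (\<lambda>n. (cmod (taylor_coeff g n))\<^sup>2 * t ^ (2 * n))"
    and "(\<Sum>n. (cmod (taylor_coeff g n))\<^sup>2 * t ^ (2 * n)) \<le> M\<^sup>2"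
proof -
  define c where "c = taylor_coeff g"
  define Q where "Q K = (\<Sum>n<K. (cmod (c n))\<^sup>2 * t ^ (2 * n))" for K
  have "complex_of_real ((t + s) / 2) \<in> ball 0 s"
    using t by (simp only: mem_ball_0 norm_of_real) (simp add: abs_of_nonneg)
  then have "(\<lambda>n. c n * of_real ((t + s) / 2) ^ n) sums g (of_real ((t + s) / 2))"
    unfolding c_def by (rule taylor_coeff_sums[OF g])
  moreover have "cmod (complex_of_real t) < cmod (complex_of_real ((t + s) / 2))"
    using t by (simp only: norm_of_real) (simp add: abs_of_nonneg)
  ultimately have "summable (\<lambda>n. norm (c n * complex_of_real t ^ n))"
    by (rule powser_insidea[OF sums_summable])
  then have abs_conv: "summable (\<lambda>n. cmod (c n) * t ^ n)"
    using t by (simp add: norm_mult norm_power abs_of_nonneg)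
  define \<epsilon> where "\<epsilon> K = (\<Sum>n. cmod (c n) * t ^ n) - (\<Sum>n<K. cmod (c n) * t ^ n)" for K
  have \<epsilon>: "\<epsilon> \<longlonglongrightarrow> 0"
    using tendsto_diff[OF tendsto_const summable_LIMSEQ[OF abs_conv], of "\<Sum>n. cmod (c n) * t ^ n"]
    by (simp add: \<epsilon>_def [abs_def])
  have Q_le: "Q K \<le> (M + \<epsilon> K)\<^sup>2" for K
    unfolding Q_def
  proof (rule Gutzmer_inequality_poly[OF t(1)])
    fix z :: complex
    assume z: "cmod z = t"
    have "(\<lambda>n. c n * z ^ n) sums g z"
      unfolding c_def by (rule taylor_coeff_sums[OF g]) (use z t in auto)
    from norm_power_series_remainder_le[OF this abs_conv, of K] z
    have "cmod (g z - (\<Sum>n<K. c n * z ^ n)) \<le> \<epsilon> K"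
      by (simp add: \<epsilon>_def)
    then show "cmod (\<Sum>n<K. c n * z ^ n) \<le> M + \<epsilon> K"
      using bound[OF z] norm_triangle_ineq4[of "g z" "g z - (\<Sum>n<K. c n * z ^ n)"] by simp
  qed
  have Q_bound: "Q K \<le> M\<^sup>2" for K
  proof (rule LIMSEQ_le_const)
    show "(\<lambda>K. (M + \<epsilon> K)\<^sup>2) \<longlonglongrightarrow> M\<^sup>2"
      using tendsto_power[OF tendsto_add[OF tendsto_const \<epsilon>, of M], of 2] by simp
    show "\<exists>N. \<forall>K'\<ge>N. Q K \<le> (M + \<epsilon> K')\<^sup>2"
    proof (intro exI allI impI)
      fix K'
      assume "K \<le> K'"
      then have "Q K \<le> Q K'"
        unfolding Q_def by (intro sum_mono2) auto
      then show "Q K \<le> (M + \<epsilon> K')\<^sup>2"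
        using Q_le[of K'] by linarith
    qed
  qed
  show summable: "summable (\<lambda>n. (cmod (taylor_coeff g n))\<^sup>2 * t ^ (2 * n))"
  proof (rule bounded_imp_summable)
    fix n
    show "(\<Sum>k\<le>n. (cmod (taylor_coeff g k))\<^sup>2 * t ^ (2 * k)) \<le> M\<^sup>2"
      using Q_bound[of "Suc n"] by (simp add: Q_def c_def lessThan_Suc_atMost)
  qed simp
  show "(\<Sum>n. (cmod (taylor_coeff g n))\<^sup>2 * t ^ (2 * n)) \<le> M\<^sup>2"
    using suminf_le_const[OF summable] Q_bound by (simp add: Q_def c_def)
qed

lemma H2_of_bounded_on_circle:
  assumes "g holomorphic_on ball 0 s" "0 < t" "t < s"
    and bound: "\<And>z. cmod z = t \<Longrightarrow> cmod (g z) \<le> M"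
  shows "g \<in> H2 t" and "h2norm t g \<le> M"
proof -
  note Gutzmer = Gutzmer_inequality[OF assms(1) less_imp_le[OF assms(2)] assms(3) bound]
  show "g \<in> H2 t"
    using Gutzmer(1) holomorphic_on_subset[OF assms(1) subset_ball] assms(3)
    by (simp add: H2_def)
  have "cmod (g (of_real t)) \<le> M"
    using assms(2) by (intro bound) simp
  then have "0 \<le> M"
    using norm_ge_zero[of "g (of_real t)"] by linarith
  then show "h2norm t g \<le> M"
    using real_sqrt_le_mono[OF Gutzmer(2)] by (simp add: h2norm_def)
qed

lemma h2norm_taylor_remainder_le_of_bounded:
  assumes g: "g holomorphic_on ball 0 R" and bound: "\<And>z. z \<in> ball 0 R \<Longrightarrow> cmod (g z) \<le> M"
    and \<rho>: "0 < \<rho>" "\<rho> < R"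
  shows "g - taylor_proj N g \<in> H2 \<rho>"
    and "h2norm \<rho> (g - taylor_proj N g) \<le> (\<rho> / R) ^ N * M"
proof -
  have H2: "g \<in> H2 t" "h2norm t g \<le> M" if "\<rho> \<le> t" "t < R" for t
    using H2_of_bounded_on_circle[OF g _ that(2) bound] that \<rho> by auto
  have remainder: "h2norm \<rho> (g - taylor_proj N g) \<le> (\<rho> / t) ^ N * M" if "\<rho> \<le> t" "t < R" for t
  proof -
    have "h2norm \<rho> (g - taylor_proj N g) \<le> (\<rho> / t) ^ N * h2norm t g"
      by (rule H2_taylor_remainder_rescale(2)[OF H2(1)[OF that] \<rho>(1) that(1)])
    also have "\<dots> \<le> (\<rho> / t) ^ N * M"
      using H2(2)[OF that] \<rho> that by (intro mult_left_mono) auto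
    finally show ?thesis .
  qed
  show "g - taylor_proj N g \<in> H2 \<rho>"
    using H2_taylor_remainder_rescale(1)[OF H2(1) \<rho>(1) order_refl] \<rho> by blast
  show "h2norm \<rho> (g - taylor_proj N g) \<le> (\<rho> / R) ^ N * M"
  proof (rule tendsto_le[OF trivial_limit_at_left_real])
    show "((\<lambda>t. (\<rho> / t) ^ N * M) \<longlongrightarrow> (\<rho> / R) ^ N * M) (at_left R)"
      using \<rho> by (intro tendsto_intros) auto
    show "eventually (\<lambda>t. h2norm \<rho> (g - taylor_proj N g) \<le> (\<rho> / t) ^ N * M) (at_left R)"
      using eventually_at_left_real[OF \<rho>(2)] by eventually_elim (use remainder in auto)
  qed simp
qed

lemma transfer_op_holomorphic:
  assumes "open S" and "\<forall>l\<in>{1..d}. \<phi> l holomorphic_on S" and "\<forall>l\<in>{1..d}. \<phi> l ` S \<subseteq> U"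
    and "h holomorphic_on U"
  shows "transfer_op d \<phi> h holomorphic_on S"
  unfolding transfer_op_def
proof (intro holomorphic_on_sum ballI holomorphic_intros)
  fix l
  assume "l \<in> {1..d}"
  then have "\<phi> l holomorphic_on S" "\<phi> l ` S \<subseteq> U"
    using assms(2,3) by auto
  then show "(\<lambda>z. h (\<phi> l z)) holomorphic_on S"
    using holomorphic_on_compose_gen[OF _ assms(4)] by (simp add: o_def)
  show "\<phi> l holomorphic_on S"
    by fact
qed (use assms(1) in auto)

lemma transfer_op_diff: "transfer_op d \<phi> f - transfer_op d \<phi> g = transfer_op d \<phi> (f - g)"
  unfolding transfer_op_def fun_diff_def by (simp add: algebra_simps flip: sum_subtractf)

lemma norm_transfer_op_le:
  assumes "\<And>l. l \<in> {1..d} \<Longrightarrow> cmod (h (\<phi> l z)) \<le> B"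
  shows "cmod (transfer_op d \<phi> h z) \<le> B * (\<Sum>l=1..d. cmod (deriv (\<phi> l) z))"
proof -
  have "cmod (transfer_op d \<phi> h z)
      \<le> (\<Sum>l=1..d. cmod (sgn (deriv (\<phi> l) 0)) * (cmod (deriv (\<phi> l) z) * cmod (h (\<phi> l z))))"
    unfolding transfer_op_def by (rule order_trans[OF norm_sum]) (simp add: norm_mult mult.assoc)
  also have "\<dots> \<le> (\<Sum>l=1..d. 1 * (cmod (deriv (\<phi> l) z) * B))"
  proof (rule sum_mono)
    fix l
    assume "l \<in> {1..d}"
    then show "cmod (sgn (deriv (\<phi> l) 0)) * (cmod (deriv (\<phi> l) z) * cmod (h (\<phi> l z)))
        \<le> 1 * (cmod (deriv (\<phi> l) z) * B)"
      using assms by (intro mult_mono mult_left_mono) (simp_all add: norm_sgn)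
  qed
  finally show ?thesis
    by (simp add: sum_distrib_left mult.commute)
qed

lemma taylor_remainder_0: "f - taylor_proj 0 f = f"
  by (simp add: taylor_proj_def fun_diff_def)

lemma ratio_powers_at_geometric_mean:
  fixes r R :: real
  assumes "0 < r" "0 < R"
  shows "(sqrt (R * r) / R) ^ N + (r / sqrt (R * r)) ^ N = 2 * (r / R) powr (real N / 2)"
proof -
  have "sqrt (r / R) = sqrt (R * r) / R" "sqrt (r / R) = r / sqrt (R * r)"
    using assms by (auto intro!: real_sqrt_unique simp: power_divide power2_eq_square)
  moreover have "sqrt (r / R) ^ N = (r / R) powr (real N / 2)"
    using assms by (simp add: powr_half_sqrt [symmetric] powr_power)
  ultimately show ?thesis
    by simp
qed

locale contracting_branches =
  fixes d :: nat and \<phi> :: "nat \<Rightarrow> complex \<Rightarrow> complex" and r \<rho> R :: real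
  assumes branch_holomorphic: "\<forall>l\<in>{1..d}. \<phi> l holomorphic_on ball 0 R"
    and branch_into: "\<forall>l\<in>{1..d}. \<phi> l ` ball 0 R \<subseteq> ball 0 r"
    and radii: "0 < r" "r < \<rho>" "\<rho> < R"
begin

abbreviation L where "L \<equiv> transfer_op d \<phi>"

lemma L_holomorphic: "h holomorphic_on ball 0 r \<Longrightarrow> L h holomorphic_on ball 0 R"
  using branch_holomorphic branch_into by (intro transfer_op_holomorphic) auto

lemma H2_holomorphic_on_inner_ball: "f \<in> H2 \<rho> \<Longrightarrow> f holomorphic_on ball 0 r"
  using radii by (auto simp: H2_def intro: holomorphic_on_subset)

lemma norm_L_taylor_remainder_le:
  assumes f: "f \<in> H2 \<rho>" and z: "z \<in> ball 0 R"
  shows "cmod (L (f - taylor_proj N f) z)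
    \<le> \<rho> / sqrt (\<rho>\<^sup>2 - r\<^sup>2) * (r / \<rho>) ^ N * h2norm \<rho> f * (\<Sum>l=1..d. cmod (deriv (\<phi> l) z))"
proof (rule norm_transfer_op_le)
  fix l
  assume "l \<in> {1..d}"
  then have "\<phi> l z \<in> ball 0 r"
    using branch_into z by blast
  then have "cmod (\<phi> l z) \<le> r"
    by simp
  then show "cmod ((f - taylor_proj N f) (\<phi> l z)) \<le> \<rho> / sqrt (\<rho>\<^sup>2 - r\<^sup>2) * (r / \<rho>) ^ N * h2norm \<rho> f"
    using norm_H2_taylor_remainder_le[OF f] radii by simp
qed

lemma L_taylor_remainder_H2:
  assumes f: "f \<in> H2 \<rho>" and D: "\<And>z. cmod z = \<rho> \<Longrightarrow> (\<Sum>l=1..d. cmod (deriv (\<phi> l) z)) \<le> D"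
  shows "L (f - taylor_proj N f) \<in> H2 \<rho>"
    and "h2norm \<rho> (L (f - taylor_proj N f)) \<le> \<rho> / sqrt (\<rho>\<^sup>2 - r\<^sup>2) * D * (r / \<rho>) ^ N * h2norm \<rho> f"
proof -
  define K where "K = \<rho> / sqrt (\<rho>\<^sup>2 - r\<^sup>2) * (r / \<rho>) ^ N * h2norm \<rho> f"
  have "0 \<le> K"
    using radii h2norm_nonneg[OF f] by (simp add: K_def)
  have holo: "L (f - taylor_proj N f) holomorphic_on ball 0 R"
    by (intro L_holomorphic taylor_remainder_holomorphic H2_holomorphic_on_inner_ball f)
  have bound: "cmod (L (f - taylor_proj N f) z) \<le> K * D" if "cmod z = \<rho>" for z
  proof -
    have "cmod (L (f - taylor_proj N f) z) \<le> K * (\<Sum>l=1..d. cmod (deriv (\<phi> l) z))"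
      using norm_L_taylor_remainder_le[OF f, of z N] that radii by (simp add: K_def)
    also have "\<dots> \<le> K * D"
      using D[OF that] \<open>0 \<le> K\<close> by (rule mult_left_mono)
    finally show ?thesis .
  qed
  note H2 = H2_of_bounded_on_circle[OF holo _ _ bound]
  show "L (f - taylor_proj N f) \<in> H2 \<rho>"
    using H2(1) radii by simp
  show "h2norm \<rho> (L (f - taylor_proj N f)) \<le> \<rho> / sqrt (\<rho>\<^sup>2 - r\<^sup>2) * D * (r / \<rho>) ^ N * h2norm \<rho> f"
    using H2(2) radii by (simp add: K_def mult_ac)
qed

lemma L_bounded: "h2_bounded_op \<rho> L"
proof -
  have "continuous_on (sphere 0 \<rho>) (\<lambda>z. \<Sum>l=1..d. cmod (deriv (\<phi> l) z))"
  proof (intro continuous_on_sum continuous_on_norm)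
    fix l
    assume "l \<in> {1..d}"
    then have "deriv (\<phi> l) holomorphic_on ball 0 R"
      using branch_holomorphic by (auto intro: holomorphic_deriv)
    then show "continuous_on (sphere 0 \<rho>) (deriv (\<phi> l))"
      by (rule holomorphic_on_imp_continuous_on[THEN continuous_on_subset]) (use radii in auto)
  qed
  moreover have "sphere (0::complex) \<rho> \<noteq> {}"
    using radii by simp
  ultimately obtain z0 where z0: "\<And>z. z \<in> sphere 0 \<rho> \<Longrightarrow>
      (\<Sum>l=1..d. cmod (deriv (\<phi> l) z)) \<le> (\<Sum>l=1..d. cmod (deriv (\<phi> l) z0))"
    using continuous_attains_sup[OF compact_sphere] by blast
  have D0: "(\<Sum>l=1..d. cmod (deriv (\<phi> l) z)) \<le> (\<Sum>l=1..d. cmod (deriv (\<phi> l) z0))"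
    if "cmod z = \<rho>" for z
    using z0 that by simp
  have "L f \<in> H2 \<rho> \<and> h2norm \<rho> (L f) \<le> \<rho> / sqrt (\<rho>\<^sup>2 - r\<^sup>2) *
      (\<Sum>l=1..d. cmod (deriv (\<phi> l) z0)) * h2norm \<rho> f" if "f \<in> H2 \<rho>" for f
    using L_taylor_remainder_H2[OF that D0, of 0] by (simp add: taylor_remainder_0)
  then show ?thesis
    unfolding h2_bounded_op_def by blast
qed

context
  fixes D :: real
  assumes deriv_sum_bound: "\<And>z. z \<in> ball 0 R \<Longrightarrow> (\<Sum>l=1..d. cmod (deriv (\<phi> l) z)) \<le> D"
begin

lemma error_constant_nonneg: "0 \<le> \<rho> / sqrt (\<rho>\<^sup>2 - r\<^sup>2) * D"
proof -
  have "0 \<le> (\<Sum>l=1..d. cmod (deriv (\<phi> l) 0))"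
    by (intro sum_nonneg norm_ge_zero)
  also have "\<dots> \<le> D"
    using radii by (intro deriv_sum_bound) simp
  finally show ?thesis
    using radii by simp
qed

lemma h2norm_L_minus_proj_L_le:
  assumes f: "f \<in> H2 \<rho>"
  shows "L f - taylor_proj N (L f) \<in> H2 \<rho>"
    and "h2norm \<rho> (L f - taylor_proj N (L f)) \<le> \<rho> / sqrt (\<rho>\<^sup>2 - r\<^sup>2) * D * (\<rho> / R) ^ N * h2norm \<rho> f"
proof -
  define K where "K = \<rho> / sqrt (\<rho>\<^sup>2 - r\<^sup>2) * h2norm \<rho> f"
  have "0 \<le> K"
    using radii h2norm_nonneg[OF f] by (simp add: K_def)
  have bound: "cmod (L f z) \<le> K * D" if "z \<in> ball 0 R" for z
  proof -
    have "cmod (L f z) \<le> K * (\<Sum>l=1..d. cmod (deriv (\<phi> l) z))"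
      using norm_L_taylor_remainder_le[OF f that, of 0] by (simp add: taylor_remainder_0 K_def)
    also have "\<dots> \<le> K * D"
      using deriv_sum_bound[OF that] \<open>0 \<le> K\<close> by (rule mult_left_mono)
    finally show ?thesis .
  qed
  note tail = h2norm_taylor_remainder_le_of_bounded[OF L_holomorphic[OF H2_holomorphic_on_inner_ball[OF f]] bound]
  show "L f - taylor_proj N (L f) \<in> H2 \<rho>"
    using tail(1) radii by simp
  show "h2norm \<rho> (L f - taylor_proj N (L f)) \<le> \<rho> / sqrt (\<rho>\<^sup>2 - r\<^sup>2) * D * (\<rho> / R) ^ N * h2norm \<rho> f"
    using tail(2)[where \<rho> = \<rho> and N = N] radii by (simp add: K_def mult_ac)
qed

lemma h2norm_L_minus_L_proj_le:
  assumes f: "f \<in> H2 \<rho>"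
  shows "L f - L (taylor_proj N f) \<in> H2 \<rho>"
    and "h2norm \<rho> (L f - L (taylor_proj N f)) \<le> \<rho> / sqrt (\<rho>\<^sup>2 - r\<^sup>2) * D * (r / \<rho>) ^ N * h2norm \<rho> f"
proof -
  have sphere_bound: "(\<Sum>l=1..d. cmod (deriv (\<phi> l) z)) \<le> D" if "cmod z = \<rho>" for z
    using that radii by (intro deriv_sum_bound) simp
  show "L f - L (taylor_proj N f) \<in> H2 \<rho>"
    unfolding transfer_op_diff by (rule L_taylor_remainder_H2(1)[OF f sphere_bound])
  show "h2norm \<rho> (L f - L (taylor_proj N f)) \<le> \<rho> / sqrt (\<rho>\<^sup>2 - r\<^sup>2) * D * (r / \<rho>) ^ N * h2norm \<rho> f"
    unfolding transfer_op_diff by (rule L_taylor_remainder_H2(2)[OF f sphere_bound])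
qed

lemma h2norm_L_minus_proj_L_proj_le:
  assumes f: "f \<in> H2 \<rho>"
  shows "h2norm \<rho> (L f - taylor_proj N (L (taylor_proj N f)))
    \<le> \<rho> / sqrt (\<rho>\<^sup>2 - r\<^sup>2) * D * ((\<rho> / R) ^ N + (r / \<rho>) ^ N) * h2norm \<rho> f"
proof -
  define g k where "g = L f" and "k = L (taylor_proj N f)"
  have g: "g holomorphic_on ball 0 R" and k: "k holomorphic_on ball 0 R"
    unfolding g_def k_def
    by (intro L_holomorphic H2_holomorphic_on_inner_ball f taylor_proj_holomorphic)+
  have coeff: "taylor_coeff (p - taylor_proj N q) n
      = taylor_coeff p n - (if n < N then taylor_coeff q n else 0)"
    if "p holomorphic_on ball 0 R" for p q n
    using taylor_coeff_diff[OF that taylor_proj_holomorphic] radii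
    by (simp add: taylor_coeff_taylor_proj)
  have "(cmod (taylor_coeff (g - taylor_proj N k) n))\<^sup>2
      \<le> (cmod (taylor_coeff (g - taylor_proj N g) n))\<^sup>2 + (cmod (taylor_coeff (g - k) n))\<^sup>2" for n
    using coeff[OF g, of g n] coeff[OF g, of k n] taylor_coeff_diff[OF g k, of n] radii
    by (cases "n < N") simp_all
  then have "h2norm \<rho> (g - taylor_proj N k)
      \<le> h2norm \<rho> (g - taylor_proj N g) + h2norm \<rho> (g - k)"
    using h2norm_L_minus_proj_L_le(1)[OF f] h2norm_L_minus_L_proj_le(1)[OF f]
    by (intro h2norm_le_add_of_coeff_le) (simp_all add: g_def k_def)
  also have "\<dots> \<le> \<rho> / sqrt (\<rho>\<^sup>2 - r\<^sup>2) * D * (\<rho> / R) ^ N * h2norm \<rho> f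
      + \<rho> / sqrt (\<rho>\<^sup>2 - r\<^sup>2) * D * (r / \<rho>) ^ N * h2norm \<rho> f"
    unfolding g_def k_def
    by (intro add_mono h2norm_L_minus_proj_L_le(2)[OF f] h2norm_L_minus_L_proj_le(2)[OF f])
  finally show ?thesis
    by (simp add: g_def k_def algebra_simps add_divide_distrib)
qed

lemma opnorm_L_minus_proj_L_le:
  "h2_opnorm \<rho> (\<lambda>f. L f - taylor_proj N (L f)) \<le> \<rho> / sqrt (\<rho>\<^sup>2 - r\<^sup>2) * D * (\<rho> / R) ^ N"
  using radii
  by (intro h2_opnorm_le h2norm_L_minus_proj_L_le(2) mult_nonneg_nonneg error_constant_nonneg) simp_all

lemma opnorm_L_minus_L_proj_le:
  "h2_opnorm \<rho> (\<lambda>f. L f - L (taylor_proj N f)) \<le> \<rho> / sqrt (\<rho>\<^sup>2 - r\<^sup>2) * D * (r / \<rho>) ^ N"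
  using radii
  by (intro h2_opnorm_le h2norm_L_minus_L_proj_le(2) mult_nonneg_nonneg error_constant_nonneg) simp_all

lemma opnorm_L_minus_proj_L_proj_le:
  "h2_opnorm \<rho> (\<lambda>f. L f - taylor_proj N (L (taylor_proj N f)))
    \<le> \<rho> / sqrt (\<rho>\<^sup>2 - r\<^sup>2) * D * ((\<rho> / R) ^ N + (r / \<rho>) ^ N)"
  using radii
  by (intro h2_opnorm_le h2norm_L_minus_proj_L_proj_le mult_nonneg_nonneg error_constant_nonneg) simp_all

end

end

theorem proposition4:
  fixes T :: "real \<Rightarrow> real" and d :: nat and a b :: "nat \<Rightarrow> real"
    and \<phi> :: "nat \<Rightarrow> complex \<Rightarrow> complex" and r R \<rho> :: real
  assumes intervals: "\<forall>l\<in>{1..d}. a l < b l"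
    and disjoint_interiors: "\<forall>l\<in>{1..d}. \<forall>m\<in>{1..d}. l \<noteq> m \<longrightarrow> {a l<..<b l} \<inter> {a m<..<b m} = {}"
    and covers: "(\<Union>l\<in>{1..d}. {a l..b l}) = {-1..1}"
    and T_inj: "\<forall>l\<in>{1..d}. inj_on T {a l<..<b l}"
    and T_analytic: "\<forall>l\<in>{1..d}. real_analytic_on T {a l<..<b l}"
    and T_deriv: "\<forall>l\<in>{1..d}. \<forall>x\<in>{a l<..<b l}. \<exists>D. (T has_real_derivative D) (at x) \<and> D \<noteq> 0"
    and T_full: "\<forall>l\<in>{1..d}. closure (T ` {a l<..<b l}) = {-1..1}"
    and phi_inverse: "\<forall>l\<in>{1..d}. \<forall>x\<in>{a l<..<b l}. \<phi> l (complex_of_real (T x)) = complex_of_real x"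
    and phi_range: "\<forall>l\<in>{1..d}. \<forall>y\<in>{-1..1}. \<phi> l (complex_of_real y) \<in> complex_of_real ` {a l..b l}"
    and rR: "1 < r" "r < R"
    and phi_holo: "\<forall>l\<in>{1..d}. \<phi> l holomorphic_on ball 0 R"
    and phi_bounded: "\<forall>l\<in>{1..d}. bounded (\<phi> l ` ball 0 R)"
    and phi_into: "(\<Union>l\<in>{1..d}. \<phi> l ` ball 0 R) \<subseteq> ball 0 r"
    and rho: "r < \<rho>" "\<rho> < R"
  defines "L \<equiv> transfer_op d \<phi>"
    and "S \<equiv> {(\<Sum>l=1..d. cmod (deriv (\<phi> l) z)) | z. z \<in> ball 0 R}"
    and "C \<equiv> \<rho> / sqrt (\<rho>\<^sup>2 - r\<^sup>2) * Sup {(\<Sum>l=1..d. cmod (deriv (\<phi> l) z)) | z. z \<in> ball 0 R}"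
  shows "h2_bounded_op \<rho> L \<and>
    (bdd_above S \<longrightarrow>
      (\<forall>N::nat.
         h2_opnorm \<rho> (\<lambda>f. L f - taylor_proj N (L f)) \<le> C * (\<rho> / R) ^ N \<and>
         h2_opnorm \<rho> (\<lambda>f. L f - L (taylor_proj N f)) \<le> C * (r / \<rho>) ^ N \<and>
         h2_opnorm \<rho> (\<lambda>f. L f - taylor_proj N (L (taylor_proj N f)))
            \<le> C * ((\<rho> / R) ^ N + (r / \<rho>) ^ N)) \<and>
      (\<rho> = sqrt (R * r) \<longrightarrow>
        (\<forall>N::nat. h2_opnorm \<rho> (\<lambda>f. L f - taylor_proj N (L (taylor_proj N f)))
            \<le> 2 * C * (r / R) powr (real N / 2))))"
proof -
  interpret contracting_branches d \<phi> r \<rho> R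
    using phi_holo phi_into rR rho by unfold_locales auto
  have estimates: "(\<forall>N::nat.
         h2_opnorm \<rho> (\<lambda>f. L f - taylor_proj N (L f)) \<le> C * (\<rho> / R) ^ N \<and>
         h2_opnorm \<rho> (\<lambda>f. L f - L (taylor_proj N f)) \<le> C * (r / \<rho>) ^ N \<and>
         h2_opnorm \<rho> (\<lambda>f. L f - taylor_proj N (L (taylor_proj N f)))
            \<le> C * ((\<rho> / R) ^ N + (r / \<rho>) ^ N))" if "bdd_above S"
  proof -
    have "(\<Sum>l=1..d. cmod (deriv (\<phi> l) z)) \<le> Sup S" if "z \<in> ball 0 R" for z
      using cSup_upper[OF _ \<open>bdd_above S\<close>] that unfolding S_def by blast
    moreover have "C = \<rho> / sqrt (\<rho>\<^sup>2 - r\<^sup>2) * Sup S"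
      by (simp add: C_def S_def)
    ultimately show ?thesis
      unfolding L_def
      using opnorm_L_minus_proj_L_le opnorm_L_minus_L_proj_le opnorm_L_minus_proj_L_proj_le
      by simp
  qed
  have "(r / R) powr (real N / 2) * 2 = (\<rho> / R) ^ N + (r / \<rho>) ^ N" if "\<rho> = sqrt (R * r)" for N
    using ratio_powers_at_geometric_mean[of r R N] that rR by simp
  with estimates have "bdd_above S \<Longrightarrow> \<rho> = sqrt (R * r) \<Longrightarrow>
      \<forall>N::nat. h2_opnorm \<rho> (\<lambda>f. L f - taylor_proj N (L (taylor_proj N f)))
        \<le> 2 * C * (r / R) powr (real N / 2)"
    by (simp add: mult_ac)
  with estimates L_bounded show ?thesis
    unfolding L_def by blast
qed

end
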